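(* Let $a,b$ be positive integers with $\gcd(a,b)=1$. For all $\pi\in\mathcal{D}_{b,-a}(a,b)$, $\mathrm{word}(\widetilde{\rho}\circ\tilde f(\pi))=\mathrm{sw}^+_{b,-a}\circ\mathrm{rev}(\mathrm{word}(\pi))$.
   Context: Partitions are drawn in English convention in the first quadrant; a partition with at most $a$ parts, each at most $b$, has as frontier a lattice path from $(0,0)$ to $(b,a)$ with unit north (N) and east (E) steps, its diagram being the unit squares above and to the left of the path; $\mathrm{word}(\lambda)\in\{\mathrm{N},\mathrm{E}\}^*$ is the word of this frontier path. $\mathrm{rev}$ reverses a word. For a word $u$ with finitely many N's, $\mathrm{ptn}(u)$ is the partition whose parts are, for each N of $u$, the number of E's preceding it. The $(b,-a)$-level of a lattice point $(x,y)$ is $by-ax$; a unit square $[x,x+1]\times[y,y+1]$ has the level of its southeast corner. Under the west-south convention, a step of a path gets the level of its starting point. $\mathcal{D}_{b,-a}(a,b)$ is the set of partitions fitting in the $a\times b$ rectangle whose frontier path visits only points of nonnegative level. For $\pi\in\mathcal{D}_{b,-a}(a,b)$ let $L(\pi)$ be the set of levels of unit squares lying above the line $by=ax$ and below the frontier path of $\pi$. Let $z=z_0z_1z_2\cdots$ with $z_0=\mathrm{E}$ and, for $i>0$, $z_i=\mathrm{N}$ if $i\in L(\pi)$ and $z_i=\mathrm{E}$ otherwise; $\tilde f(\pi)=\mathrm{ptn}(z)$. Let $y$ be the subword of $z$ consisting of those $z_i$ ($i\ge0$) for which $i+a$ is the west-south level of some step of the frontier path of $\pi$; then $\widetilde\rho(\tilde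 f(\pi))=\mathrm{ptn}(y)$, regarded as a partition fitting in the $a\times b$ rectangle. For a word $w=w_1\cdots w_n$, set $l_0=0$, $l_i=l_{i-1}+b$ if $w_i=\mathrm{N}$, $l_i=l_{i-1}-a$ if $w_i=\mathrm{E}$. $\mathrm{sw}^+_{b,-a}(w)$ is obtained by: for $k=0,-1,-2,\ldots$ and then $k=\ldots,3,2,1$ (all nonpositive values in decreasing order, then positive values in decreasing order), scan $w$ from left to right appending each $w_i$ ($i\ge1$) with $l_i=k$. *)

theory Defs
  imports Main "HOL-Library.Multiset"
begin

text \<open>Letters of lattice words: N = unit north step, E = unit east step.\<close>
datatype step = N | E

definition is_partition :: "nat multiset \<Rightarrow> bool" where
  "is_partition lam \<longleftrightarrow> 0 \<notin># lam"

definition fits_in :: "nat \<Rightarrow> nat \<Rightarrow> nat multiset \<Rightarrow> bool" where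
  "fits_in a b lam \<longleftrightarrow> is_partition lam \<and> size lam \<le> a \<and> (\<forall>p\<in>#lam. p \<le> b)"

definition numN :: "step list \<Rightarrow> nat" where
  "numN u = length (filter (\<lambda>c. c = N) u)"

definition numE :: "step list \<Rightarrow> nat" where
  "numE u = length (filter (\<lambda>c. c = E) u)"

definition ptn :: "step list \<Rightarrow> nat multiset" where
  "ptn u = filter_mset (\<lambda>k. 0 < k)
     (mset (map (\<lambda>i. numE (take i u)) (filter (\<lambda>i. u ! i = N) [0..<length u])))"

text \<open>Frontier word of a partition in the a x b rectangle: rows from bottom to top have
  weakly increasing lengths mu_0 <= ... <= mu_(a-1) (the parts padded with zeros);
  the path is E^(mu_0) N E^(mu_1 - mu_0) N ... N E^(b - mu_(a-1)).\<close>
fun word_aux :: "nat \<Rightarrow> nat list \<Rightarrow> nat \<Rightarrow> step list" where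
  "word_aux prev [] b = replicate (b - prev) E"
| "word_aux prev (m # ms) b = replicate (m - prev) E @ N # word_aux m ms b"

definition word :: "nat \<Rightarrow> nat \<Rightarrow> nat multiset \<Rightarrow> step list" where
  "word a b lam = word_aux 0 (replicate (a - size lam) 0 @ sorted_list_of_multiset lam) b"

text \<open>Starting point of the i-th step (0-based) of a word, i.e. the point reached after
  the first i steps.\<close>
definition pt :: "step list \<Rightarrow> nat \<Rightarrow> nat \<times> nat" where
  "pt w i = (numE (take i w), numN (take i w))"

definition level :: "nat \<Rightarrow> nat \<Rightarrow> nat \<times> nat \<Rightarrow> int" where
  "level a b p = int b * int (snd p) - int a * int (fst p)"

definition D :: "nat \<Rightarrow> nat \<Rightarrow> nat multiset set" where
  "D a b = {\<pi>. fits_in a b \<pi> \<and>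
              (\<forall>i\<le>length (word a b \<pi>). 0 \<le> level a b (pt (word a b \<pi>) i))}"

text \<open>x-coordinate of the north step of the path w going from height y to height y+1.\<close>
definition xN :: "step list \<Rightarrow> nat \<Rightarrow> nat" where
  "xN w y = numE (take (filter (\<lambda>i. w ! i = N) [0..<length w] ! y) w)"

text \<open>L(pi): levels (level of the southeast corner (x+1,y)) of the unit squares
  [x,x+1] x [y,y+1] lying in the rectangle, below the frontier path and above the
  line b*y = a*x.\<close>
definition Lset :: "nat \<Rightarrow> nat \<Rightarrow> nat multiset \<Rightarrow> int set" where
  "Lset a b \<pi> = {level a b (x + 1, y) | x y.
      y < a \<and> x < b \<and> xN (word a b \<pi>) y \<le> x \<and> 0 \<le> level a b (x + 1, y)}"

definition zword :: "nat \<Rightarrow> nat \<Rightarrow> nat multiset \<Rightarrow> nat \<Rightarrow> step" where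
  "zword a b \<pi> i = (if i = 0 then E else if int i \<in> Lset a b \<pi> then N else E)"

definition step_levels :: "nat \<Rightarrow> nat \<Rightarrow> nat multiset \<Rightarrow> int set" where
  "step_levels a b \<pi> = {level a b (pt (word a b \<pi>) i) | i. i < length (word a b \<pi>)}"

definition yword :: "nat \<Rightarrow> nat \<Rightarrow> nat multiset \<Rightarrow> step list" where
  "yword a b \<pi> = map (zword a b \<pi>)
     (sorted_list_of_set {i::nat. int i + int a \<in> step_levels a b \<pi>})"

text \<open>rho~(f~(pi)) = ptn(y).\<close>
definition rho_f :: "nat \<Rightarrow> nat \<Rightarrow> nat multiset \<Rightarrow> nat multiset" where
  "rho_f a b \<pi> = ptn (yword a b \<pi>)"

text \<open>sw^+_{b,-a}: l_i = level after the first i letters (i = 1..n); collect letters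
  with l_i = k for k = 0,-1,-2,... and then for positive k in decreasing order.
  All l_i lie in [-a*n, b*n].\<close>
definition lvl_after :: "nat \<Rightarrow> nat \<Rightarrow> step list \<Rightarrow> nat \<Rightarrow> int" where
  "lvl_after a b w i = int b * int (numN (take i w)) - int a * int (numE (take i w))"

definition sw_plus :: "nat \<Rightarrow> nat \<Rightarrow> step list \<Rightarrow> step list" where
  "sw_plus a b w =
     (let n = length w;
          ks = rev [- (int a * int n)..0] @ rev [1..int b * int n]
      in concat (map (\<lambda>k. map (\<lambda>i. w ! (i - 1))
                         (filter (\<lambda>i. lvl_after a b w i = k) [1..<n+1])) ks))"

end

theory Submission
  imports Defs
begin

text \<open>Since gcd(a,b) = 1, the steps of the frontier path of \<open>\<pi>\<close> start at pairwise distinct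
  levels, all nonnegative. Reversing the word negates these levels, so
  \<open>sw\<^sup>+ \<circ> rev\<close> lists the steps of the path in increasing order of their starting levels.
  On the other side, a step starting at level \<open>\<ell> \<ge> a\<close> is a north step exactly when the
  square whose south-west corner is its starting point lies below the path; that square
  has level \<open>\<ell> - a\<close>, so \<open>z\<^sub>\<ell>\<^sub>-\<^sub>a\<close> is the letter of this step and y lists the steps
  of level at least a in the same order. The steps starting below level a are north steps,
  as an east step would end below level 0; they only contribute leading N's, which ptn
  ignores, and word \<open>\<circ>\<close> ptn is the identity on words with a N's and b E's.\<close>

lemma step_neq_N_iff [simp]: "x \<noteq> N \<longleftrightarrow> x = E"
  and step_neq_E_iff [simp]: "x \<noteq> E \<longleftrightarrow> x = N"
  by (cases x; simp)+

lemma numE_Nil [simp]: "numE [] = 0"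
  and numN_Nil [simp]: "numN [] = 0"
  and numE_Cons [simp]: "numE (x # u) = (if x = E then Suc (numE u) else numE u)"
  and numN_Cons [simp]: "numN (x # u) = (if x = N then Suc (numN u) else numN u)"
  and numE_append [simp]: "numE (u @ v) = numE u + numE v"
  and numN_append [simp]: "numN (u @ v) = numN u + numN v"
  and numE_rev [simp]: "numE (rev u) = numE u"
  and numN_rev [simp]: "numN (rev u) = numN u"
  by (simp_all add: numE_def numN_def flip: rev_filter)

lemma numE_replicate_E [simp]: "numE (replicate k E) = k"
  and numN_replicate_E [simp]: "numN (replicate k E) = 0"
  by (induction k) simp_all

lemma numN_add_numE: "numN u + numE u = length u"
  by (induction u) auto

lemma numE_take_Suc:
  "i < length w \<Longrightarrow> numE (take (Suc i) w) = numE (take i w) + (if w ! i = E then 1 else 0)"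
  and numN_take_Suc:
  "i < length w \<Longrightarrow> numN (take (Suc i) w) = numN (take i w) + (if w ! i = N then 1 else 0)"
  by (auto simp: take_Suc_conv_app_nth)

lemma numE_take_le: "numE (take i w) \<le> numE w"
  and numN_take_le: "numN (take i w) \<le> numN w"
  by (metis append_take_drop_id le_add1 numE_append numN_append)+

lemma numE_take_mono: "i \<le> j \<Longrightarrow> numE (take i w) \<le> numE (take j w)"
  by (metis min.absorb1 numE_take_le take_take)

lemma numN_numE_permute:
  assumes "distinct js" and "set js = {..<length w}"
  shows "numN (map ((!) w) js) = numN w \<and> numE (map ((!) w) js) = numE w"
proof -
  have "mset js = mset [0..<length w]"
    using assms set_eq_iff_mset_eq_distinct[of js "[0..<length w]"] by (simp add: atLeast0LessThan)
  then have "mset (map ((!) w) js) = mset w"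
    by (metis map_nth mset_map)
  then show ?thesis
    unfolding numN_def numE_def by (metis mset_filter size_mset)
qed

subsection \<open>Partitions and their frontier words\<close>

fun east_counts :: "step list \<Rightarrow> nat list" where
  "east_counts [] = []"
| "east_counts (N # u) = 0 # east_counts u"
| "east_counts (E # u) = map Suc (east_counts u)"

lemma east_counts_eq:
  "map (\<lambda>i. numE (take i u)) (filter (\<lambda>i. u ! i = N) [0..<length u]) = east_counts u"
proof (induction u)
  case (Cons x u)
  have "[0..<Suc n] = 0 # map Suc [0..<n]" for n
    by (simp add: map_Suc_upt upt_conv_Cons)
  then have "[0..<length (x # u)] = 0 # map Suc [0..<length u]"
    by simp
  with Cons show ?case
    by (cases x) (simp_all add: filter_map o_def flip: Cons.IH del: upt_Suc)
qed simp

lemma ptn_eq_east_counts: "ptn u = filter_mset ((<) 0) (mset (east_counts u))"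
  unfolding ptn_def east_counts_eq ..

lemma ptn_replicate_N_append: "ptn (replicate k N @ u) = ptn u"
  by (induction k) (simp_all add: ptn_eq_east_counts)

lemma length_east_counts: "length (east_counts u) = numN u"
  by (induction u rule: east_counts.induct) auto

lemma sorted_east_counts: "sorted (east_counts u)"
  by (induction u rule: east_counts.induct) (auto simp: sorted_map)

lemma east_counts_zeros_first:
  "east_counts u = replicate (numN u - length (filter ((<) 0) (east_counts u))) 0
                   @ filter ((<) 0) (east_counts u)"
proof (induction u rule: east_counts.induct)
  case (2 u)
  have "length (filter ((<) 0) (east_counts u)) \<le> numN u"
    using length_filter_le[of "(<) 0" "east_counts u"] length_east_counts[of u] by simp
  with 2 show ?case by (simp add: Suc_diff_le)
next
  case (3 u)
  have "filter ((<) 0) (map Suc (east_counts u)) = map Suc (east_counts u)"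
    by (simp add: filter_id_conv)
  with 3 show ?case by (simp add: length_east_counts)
qed simp

lemma word_aux_east_counts: "word_aux p (map ((+) p) (east_counts u)) (p + numE u) = u"
proof (induction u arbitrary: p rule: east_counts.induct)
  case (3 u)
  have shift: "map ((+) p) (east_counts (E # u)) = map ((+) (Suc p)) (east_counts u)"
    and width: "p + numE (E # u) = Suc p + numE u"
    by (simp_all add: o_def)
  have "word_aux p (map ((+) (Suc p)) (east_counts u)) (Suc p + numE u)
      = E # word_aux (Suc p) (map ((+) (Suc p)) (east_counts u)) (Suc p + numE u)"
    by (cases "east_counts u") (simp_all add: Suc_diff_le)
  then show ?case
    unfolding shift width 3 .
qed simp_all

lemma word_ptn:
  assumes "numN u = a" and "numE u = b"
  shows "word a b (ptn u) = u"
proof -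
  let ?parts = "filter ((<) 0) (east_counts u)"
  have parts: "ptn u = mset ?parts"
    by (simp add: ptn_eq_east_counts)
  have "sorted_list_of_multiset (ptn u) = ?parts"
    unfolding parts sorted_list_of_multiset_mset
    by (simp add: sorted_east_counts sorted_wrt_filter sorted_sort_id)
  moreover have "size (ptn u) = length ?parts"
    unfolding parts by (rule size_mset)
  ultimately have "replicate (a - size (ptn u)) 0 @ sorted_list_of_multiset (ptn u) = east_counts u"
    using east_counts_zeros_first[of u] assms by simp
  moreover have "word_aux 0 (east_counts u) b = u"
    using word_aux_east_counts[of 0 u] assms by (simp add: map_idI)
  ultimately show ?thesis
    unfolding word_def by simp
qed

lemma numN_word_aux: "numN (word_aux p ms B) = length ms"
  by (induction p ms B rule: word_aux.induct) simp_all

lemma numE_word_aux: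
  "\<lbrakk>sorted ms; \<forall>m\<in>set ms. p \<le> m \<and> m \<le> B; p \<le> B\<rbrakk> \<Longrightarrow> numE (word_aux p ms B) = B - p"
  by (induction p ms B rule: word_aux.induct) auto

lemma
  assumes "fits_in a b lam"
  shows numN_word: "numN (word a b lam) = a"
    and numE_word: "numE (word a b lam) = b"
proof -
  let ?ms = "replicate (a - size lam) 0 @ sorted_list_of_multiset lam"
  have "size lam \<le> a" and "\<forall>p\<in>#lam. p \<le> b"
    using assms by (auto simp: fits_in_def)
  moreover have "length (sorted_list_of_multiset lam) = size lam"
    by (metis mset_sorted_list_of_multiset size_mset)
  ultimately have "length ?ms = a" and "\<forall>m\<in>set ?ms. 0 \<le> m \<and> m \<le> b"
    by auto
  moreover have "sorted ?ms"
    by (simp add: sorted_append)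
  ultimately show "numN (word a b lam) = a" and "numE (word a b lam) = b"
    unfolding word_def by (simp_all add: numN_word_aux numE_word_aux)
qed

subsection \<open>Levels along a lattice path\<close>

lemma lvl_after_eq_level: "lvl_after a b w i = level a b (pt w i)"
  by (simp add: lvl_after_def level_def pt_def)

lemma level_Suc_fst: "level a b (Suc x, y) = level a b (x, y) - int a"
  by (simp add: level_def algebra_simps)

lemma level_eq_imp_eq:
  assumes "coprime a b" and "level a b (x, y) = level a b (x', y')"
    and "y < a \<and> y' < a \<or> x < b \<and> x' < b"
  shows "x = x' \<and> y = y'"
proof -
  have eq: "int b * (int y - int y') = int a * (int x - int x')"
    using assms(2) by (simp add: level_def algebra_simps)
  have coprime: "coprime (int a) (int b)"
    using assms(1) by simp
  from assms(3) show ?thesis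
  proof
    assume "y < a \<and> y' < a"
    moreover have "int a dvd int y - int y'"
      using coprime eq by (metis coprime_dvd_mult_right_iff dvd_triv_left)
    ultimately have "y = y'"
      using dvd_imp_le_int[of "int y - int y'" "int a"] by fastforce
    with eq \<open>y < a \<and> y' < a\<close> show ?thesis
      by simp
  next
    assume "x < b \<and> x' < b"
    moreover have "int b dvd int x - int x'"
      using coprime eq by (metis coprime_commute coprime_dvd_mult_right_iff dvd_triv_left)
    ultimately have "x = x'"
      using dvd_imp_le_int[of "int x - int x'" "int b"] by fastforce
    with eq \<open>x < b \<and> x' < b\<close> show ?thesis
      by simp
  qed
qed

lemma level_top_edge_pos: "x < b \<Longrightarrow> 0 < a \<Longrightarrow> 0 < level a b (x, a)"
  and level_right_edge_neg: "y < a \<Longrightarrow> 0 < b \<Longrightarrow> level a b (b, y) < 0"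
  by (simp_all add: level_def algebra_simps)

lemma lvl_after_Suc:
  "i < length w \<Longrightarrow>
   lvl_after a b w (Suc i) = lvl_after a b w i + (if w ! i = N then int b else - int a)"
  by (auto simp: lvl_after_def numE_take_Suc numN_take_Suc algebra_simps)

lemma lvl_after_rev:
  assumes "numN w = a" and "numE w = b" and "i \<le> length w"
  shows "lvl_after a b (rev w) i = - lvl_after a b w (length w - i)"
proof -
  let ?j = "length w - i"
  have "numN (drop ?j w) + numN (take ?j w) = a" and "numE (drop ?j w) + numE (take ?j w) = b"
    using assms(1,2) by (metis add.commute append_take_drop_id numN_append numE_append)+
  moreover have "take i (rev w) = rev (drop ?j w)"
    by (simp add: take_rev)
  ultimately show ?thesis
    by (auto simp: lvl_after_def algebra_simps)
qed

lemma lvl_after_inj_on: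
  assumes "coprime a b" and "numN w = a" and "numE w = b"
  shows "inj_on (lvl_after a b w) {..<length w}"
proof (rule inj_onI)
  fix i j
  assume i: "i \<in> {..<length w}" and j: "j \<in> {..<length w}"
    and eq: "lvl_after a b w i = lvl_after a b w j"
  let ?X = "\<lambda>k. numE (take k w)" and ?Y = "\<lambda>k. numN (take k w)"
  have length_w: "length w = a + b"
    using assms numN_add_numE[of w] by simp
  have coords: "?X k + ?Y k = k" "?X k \<le> b" "?Y k \<le> a" if "k < length w" for k
    using that numN_add_numE[of "take k w"] numE_take_le[of k w] numN_take_le[of k w] assms
    by simp_all
  have level_eq: "level a b (?X i, ?Y i) = level a b (?X j, ?Y j)"
    using eq by (simp add: lvl_after_eq_level pt_def)
  have "?Y k < a \<or> ?X k < b" if "k < length w" for k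
    using coords[OF that] that length_w by linarith
  then consider "?Y i < a \<and> ?Y j < a \<or> ?X i < b \<and> ?X j < b"
    | "?Y i = a" "?X i < b" "?X j = b" "?Y j < a"
    | "?Y j = a" "?X j < b" "?X i = b" "?Y i < a"
    using i j coords by (metis le_neq_implies_less lessThan_iff)
  then show "i = j"
  proof cases
    case 1
    then show ?thesis
      using level_eq_imp_eq[OF assms(1) level_eq] coords i j by (metis lessThan_iff)
  next
    case 2
    then have "0 < level a b (?X i, ?Y i)" and "level a b (?X j, ?Y j) < 0"
      by (auto intro: level_top_edge_pos level_right_edge_neg)
    with level_eq show ?thesis
      by simp
  next
    case 3
    then have "0 < level a b (?X j, ?Y j)" and "level a b (?X i, ?Y i) < 0"
      by (auto intro: level_top_edge_pos level_right_edge_neg)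
    with level_eq show ?thesis
      by simp
  qed
qed

subsection \<open>The column of a north step\<close>

lemma length_filter_N_upt:
  "i \<le> length w \<Longrightarrow> length (filter (\<lambda>j. w ! j = N) [0..<i]) = numN (take i w)"
  by (induction i) (simp_all add: take_Suc_conv_app_nth numN_def)

lemma filter_N_upt_split:
  assumes "i < length w"
  shows "filter (\<lambda>j. w ! j = N) [0..<length w] =
     filter (\<lambda>j. w ! j = N) [0..<i] @ (if w ! i = N then [i] else [])
     @ filter (\<lambda>j. w ! j = N) [Suc i..<length w]"
proof -
  have "[0..<length w] = [0..<i] @ i # [Suc i..<length w]"
    using assms upt_add_eq_append[of 0 i "length w - i"] by (simp add: upt_conv_Cons)
  then show ?thesis
    by simp
qed

lemma xN_at_N_step:
  assumes "i < length w" and "w ! i = N"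
  shows "xN w (numN (take i w)) = numE (take i w)"
proof -
  have "filter (\<lambda>j. w ! j = N) [0..<length w] ! numN (take i w) = i"
    using filter_N_upt_split[OF assms(1)] assms length_filter_N_upt[of i w]
    by (simp add: nth_append)
  then show ?thesis
    by (simp add: xN_def)
qed

lemma xN_after_E_step:
  assumes "i < length w" and "w ! i = E" and "numN (take i w) < numN w"
  shows "numE (take i w) < xN w (numN (take i w))"
proof -
  let ?later = "filter (\<lambda>j. w ! j = N) [Suc i..<length w]"
  have split: "filter (\<lambda>j. w ! j = N) [0..<length w] = filter (\<lambda>j. w ! j = N) [0..<i] @ ?later"
    using filter_N_upt_split[OF assms(1)] assms(2) by simp
  have before: "length (filter (\<lambda>j. w ! j = N) [0..<i]) = numN (take i w)"
    using length_filter_N_upt[of i w] assms(1) by simp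
  have "?later \<noteq> []"
    using split before assms(3) length_filter_N_upt[of "length w" w] by auto
  then have "Suc i \<le> ?later ! 0"
    using nth_mem[of 0 ?later] by fastforce
  then have "numE (take (Suc i) w) \<le> numE (take (?later ! 0) w)"
    by (rule numE_take_mono)
  moreover have "xN w (numN (take i w)) = numE (take (?later ! 0) w)"
    unfolding xN_def split using before by (simp add: nth_append)
  ultimately show ?thesis
    using numE_take_Suc[OF assms(1)] assms(2) by simp
qed

subsection \<open>Reading a path by the levels of its steps\<close>

definition start_levels :: "nat \<Rightarrow> nat \<Rightarrow> step list \<Rightarrow> int set" where
  "start_levels a b w = lvl_after a b w ` {..<length w}"

definition step_at_level :: "nat \<Rightarrow> nat \<Rightarrow> step list \<Rightarrow> int \<Rightarrow> step" where
  "step_at_level a b w t = w ! the_inv_into {..<length w} (lvl_after a b w) t"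

definition steps_by_level :: "nat \<Rightarrow> nat \<Rightarrow> step list \<Rightarrow> step list" where
  "steps_by_level a b w = map (step_at_level a b w) (sorted_list_of_set (start_levels a b w))"

lemma step_at_level_lvl_after:
  "inj_on (lvl_after a b w) {..<length w} \<Longrightarrow> i < length w
   \<Longrightarrow> step_at_level a b w (lvl_after a b w i) = w ! i"
  by (simp add: step_at_level_def the_inv_into_f_f)

lemma numN_numE_steps_by_level:
  assumes "inj_on (lvl_after a b w) {..<length w}"
  shows "numN (steps_by_level a b w) = numN w \<and> numE (steps_by_level a b w) = numE w"
proof -
  let ?idx = "map (the_inv_into {..<length w} (lvl_after a b w))
                (sorted_list_of_set (start_levels a b w))"
  have "inj_on (the_inv_into {..<length w} (lvl_after a b w)) (start_levels a b w)"
    unfolding start_levels_def using assms by (rule inj_on_the_inv_into)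
  then have "distinct ?idx"
    by (simp add: distinct_map start_levels_def)
  moreover have "set ?idx = {..<length w}"
    using assms by (simp add: start_levels_def the_inv_into_onto)
  moreover have "steps_by_level a b w = map ((!) w) ?idx"
    by (simp add: steps_by_level_def step_at_level_def o_def)
  ultimately show ?thesis
    using numN_numE_permute[of ?idx w] by simp
qed

lemma concat_map_if_singleton:
  "concat (map (\<lambda>x. if P x then [f x] else []) xs) = map f (filter P xs)"
  by (induction xs) auto

lemma sorted_split_at:
  fixes xs :: "'a::linorder list"
  shows "sorted xs \<Longrightarrow> xs = filter (\<lambda>x. x < c) xs @ filter (\<lambda>x. c \<le> x) xs"
proof (induction xs)
  case (Cons x xs)
  show ?case
  proof (cases "x < c")
    case False
    with Cons.prems have "filter (\<lambda>x. x < c) xs = []" and "filter (\<lambda>x. c \<le> x) xs = xs"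
      by (auto simp: filter_empty_conv filter_id_conv)
    with False show ?thesis
      by simp
  qed (use Cons in simp)
qed simp

lemma map_uminus_rev_upto: "map uminus (rev [- int m..0]) = [0..int m]"
proof (induction m)
  case (Suc m)
  have "[- int (Suc m)..0] = - int (Suc m) # [- int m..0]"
    by (subst upto_rec1) (auto simp: algebra_simps)
  moreover have "[0..int (Suc m)] = [0..int m] @ [int (Suc m)]"
    by (subst upto_rec2) auto
  ultimately show ?case
    using Suc by simp
qed simp

lemma sw_plus_rev_block:
  assumes "numN w = a" and "numE w = b" and inj: "inj_on (lvl_after a b w) {..<length w}"
  shows "map (\<lambda>i. rev w ! (i - 1)) (filter (\<lambda>i. lvl_after a b (rev w) i = k) [1..<length w + 1])
     = (if - k \<in> start_levels a b w then [step_at_level a b w (- k)] else [])"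
proof -
  let ?n = "length w"
  let ?F = "filter (\<lambda>i. lvl_after a b (rev w) i = k) [1..<?n + 1]"
  have set_F: "set ?F = {i. 1 \<le> i \<and> i \<le> ?n \<and> lvl_after a b w (?n - i) = - k}"
    using lvl_after_rev[OF assms(1,2)] by auto
  show ?thesis
  proof (cases "- k \<in> start_levels a b w")
    case True
    then obtain j where j: "j < ?n" "lvl_after a b w j = - k"
      by (auto simp: start_levels_def)
    have "set ?F = {?n - j}"
    proof
      show "set ?F \<subseteq> {?n - j}"
      proof
        fix i
        assume "i \<in> set ?F"
        then have "1 \<le> i" "i \<le> ?n" "lvl_after a b w (?n - i) = lvl_after a b w j"
          using set_F j by auto
        then have "?n - i = j"
          using inj_onD[OF inj] j(1) by auto
        with \<open>i \<le> ?n\<close> show "i \<in> {?n - j}"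
          by auto
      qed
      show "{?n - j} \<subseteq> set ?F"
        using set_F j by auto
    qed
    moreover have "sorted ?F"
      by (rule sorted_wrt_filter) (rule sorted_upt)
    ultimately have "?F = [?n - j]"
      by (intro sorted_distinct_set_unique) simp_all
    moreover have "rev w ! (?n - j - 1) = w ! j"
      using j(1) by (simp add: rev_nth)
    ultimately show ?thesis
      using True j step_at_level_lvl_after[OF inj j(1)] by simp
  next
    case False
    have "lvl_after a b w (?n - i) \<noteq> - k" if "1 \<le> i" "i \<le> ?n" for i
    proof -
      have "?n - i \<in> {..<?n}"
        using that by simp
      with False show ?thesis
        unfolding start_levels_def by (metis image_eqI)
    qed
    then have "?F = []"
      unfolding set_empty[symmetric] set_F by auto
    then show ?thesis
      using False by simp
  qed
qed

lemma sw_plus_rev_eq_steps_by_level: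
  assumes counts: "numN w = a" "numE w = b"
    and inj: "inj_on (lvl_after a b w) {..<length w}"
    and nonneg: "\<forall>i<length w. 0 \<le> lvl_after a b w i"
  shows "sw_plus a b (rev w) = steps_by_level a b w"
proof -
  let ?n = "length w"
  let ?S = "start_levels a b w"
  let ?f = "\<lambda>k. step_at_level a b w (- k)"
  have S_bounds: "0 \<le> t \<and> t \<le> int (a * ?n)" if "t \<in> ?S" for t
  proof -
    obtain i where i: "i < ?n" "t = lvl_after a b w i"
      using \<open>t \<in> ?S\<close> by (auto simp: start_levels_def)
    have "int b * int (numN (take i w)) \<le> int b * int a"
      using numN_take_le[of i w] counts by (intro mult_left_mono) simp_all
    moreover have "0 \<le> int a * int (numE (take i w))"
      by simp
    ultimately have "t \<le> int b * int a"
      using i unfolding lvl_after_def by linarith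
    also have "\<dots> \<le> int a * int ?n"
    proof -
      have "b * a \<le> a * ?n"
        using numN_add_numE[of w] counts by (simp add: algebra_simps)
      then show ?thesis
        by (metis of_nat_le_iff of_nat_mult)
    qed
    finally show ?thesis
      using nonneg i by simp
  qed
  have "sw_plus a b (rev w)
      = concat (map (\<lambda>k. if - k \<in> ?S then [?f k] else [])
          (rev [- int (a * ?n)..0] @ rev [1..int b * int ?n]))"
    unfolding sw_plus_def Let_def length_rev sw_plus_rev_block[OF counts inj] by simp
  also have "\<dots> = map ?f (filter (\<lambda>k. - k \<in> ?S) (rev [- int (a * ?n)..0]))"
    using S_bounds by (fastforce simp: concat_map_if_singleton filter_empty_conv)
  also have "\<dots> = map (step_at_level a b w) (map uminus (filter (\<lambda>k. - k \<in> ?S) (rev [- int (a * ?n)..0])))"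
    by simp
  also have "map uminus (filter (\<lambda>k. - k \<in> ?S) (rev [- int (a * ?n)..0]))
      = filter (\<lambda>t. t \<in> ?S) [0..int (a * ?n)]"
    unfolding map_uminus_rev_upto[symmetric] by (simp add: filter_map o_def)
  also have "filter (\<lambda>t. t \<in> ?S) [0..int (a * ?n)] = sorted_list_of_set ?S"
    using S_bounds by (intro sorted_distinct_set_unique)
      (auto simp: sorted_wrt_filter start_levels_def)
  finally show ?thesis
    unfolding steps_by_level_def .
qed

subsection \<open>The frontier path of a rational Dyck partition\<close>

locale rational_Dyck_partition =
  fixes a b :: nat and \<pi> :: "nat multiset"
  assumes a_pos: "0 < a" and b_pos: "0 < b" and coprime: "coprime a b"
    and in_D: "\<pi> \<in> D a b"
begin

abbreviation path :: "step list" where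
  "path \<equiv> word a b \<pi>"

lemma numN_path: "numN path = a"
  and numE_path: "numE path = b"
  using in_D numN_word numE_word by (simp_all add: D_def)

lemma lvl_after_path_nonneg: "i \<le> length path \<Longrightarrow> 0 \<le> lvl_after a b path i"
  using in_D by (simp add: D_def lvl_after_eq_level)

lemma lvl_after_path_inj: "inj_on (lvl_after a b path) {..<length path}"
  using coprime numN_path numE_path by (rule lvl_after_inj_on)

lemma step_levels_eq: "step_levels a b \<pi> = start_levels a b path"
  by (auto simp: step_levels_def start_levels_def lvl_after_eq_level)

lemma E_step_level_ge:
  "i < length path \<Longrightarrow> path ! i = E \<Longrightarrow> int a \<le> lvl_after a b path i"
  using lvl_after_Suc[of i path a b] lvl_after_path_nonneg[of "Suc i"] by simp

lemma zword_at_step: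
  assumes i: "i < length path" and high: "int a \<le> lvl_after a b path i"
  shows "zword a b \<pi> (nat (lvl_after a b path i - int a)) = path ! i"
proof -
  let ?X = "numE (take i path)" and ?Y = "numN (take i path)"
  have level_i: "lvl_after a b path i = level a b (?X, ?Y)"
    by (simp add: lvl_after_eq_level pt_def)
  have square_level: "level a b (?X + 1, ?Y) = lvl_after a b path i - int a"
    using level_i level_Suc_fst by simp
  show ?thesis
  proof (cases "path ! i")
    case N
    have "?Y < a"
      using numN_take_Suc[OF i] numN_take_le[of "Suc i" path] numN_path N by simp
    moreover have "?X < b"
    proof (rule ccontr)
      assume "\<not> ?X < b"
      then have "?X = b"
        using numE_take_le[of i path] numE_path by simp
      then show False
        using level_right_edge_neg[OF \<open>?Y < a\<close> b_pos] level_i high by simp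
    qed
    ultimately have "lvl_after a b path i - int a \<in> Lset a b \<pi>"
      using square_level xN_at_N_step[OF i N] high unfolding Lset_def by force
    moreover have "lvl_after a b path i - int a \<noteq> 0"
      using level_eq_imp_eq[OF coprime, of "?X + 1" ?Y 0 0] \<open>?Y < a\<close> a_pos square_level
      by (auto simp: level_def)
    ultimately show ?thesis
      using N high by (simp add: zword_def)
  next
    case E
    have "lvl_after a b path i - int a \<notin> Lset a b \<pi>"
    proof
      assume "lvl_after a b path i - int a \<in> Lset a b \<pi>"
      then obtain x y where y: "y < a" and x: "x < b" and left_edge: "xN path y \<le> x"
        and "level a b (x + 1, y) = level a b (?X + 1, ?Y)"
        using square_level unfolding Lset_def by auto
      then have "level a b (x, y) = level a b (?X, ?Y)"
        by (simp add: level_Suc_fst)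
      moreover have "?X < b"
        using numE_take_Suc[OF i] numE_take_le[of "Suc i" path] numE_path E by simp
      ultimately have "x = ?X" "y = ?Y"
        using level_eq_imp_eq[OF coprime] x by blast+
      then show False
        using xN_after_E_step[OF i E] y left_edge numN_path by simp
    qed
    then show ?thesis
      using E high by (simp add: zword_def)
  qed
qed

lemma step_at_low_level:
  assumes "t \<in> start_levels a b path" and "t < int a"
  shows "step_at_level a b path t = N"
proof -
  obtain i where i: "i < length path" "t = lvl_after a b path i"
    using assms(1) by (auto simp: start_levels_def)
  then have "path ! i = N"
    using E_step_level_ge[OF i(1)] assms(2) by (cases "path ! i") auto
  then show ?thesis
    using i step_at_level_lvl_after[OF lvl_after_path_inj] by simp
qed

lemma zword_at_high_level:
  assumes "t \<in> start_levels a b path" and "int a \<le> t"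
  shows "zword a b \<pi> (nat (t - int a)) = step_at_level a b path t"
proof -
  obtain i where i: "i < length path" "t = lvl_after a b path i"
    using assms(1) by (auto simp: start_levels_def)
  then show ?thesis
    using zword_at_step assms(2) step_at_level_lvl_after[OF lvl_after_path_inj] by simp
qed

lemma yword_eq:
  "yword a b \<pi> = map (step_at_level a b path)
     (filter (\<lambda>t. int a \<le> t) (sorted_list_of_set (start_levels a b path)))"
proof -
  let ?S = "start_levels a b path"
  let ?high = "filter (\<lambda>t. int a \<le> t) (sorted_list_of_set ?S)"
  have finite: "finite ?S"
    by (simp add: start_levels_def)
  have "sorted_list_of_set {i. int i + int a \<in> ?S} = map (\<lambda>t. nat (t - int a)) ?high"
  proof (rule sorted_distinct_set_unique)
    show "sorted (map (\<lambda>t. nat (t - int a)) ?high)"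
      by (rule sorted_map_mono) (auto intro: sorted_wrt_filter mono_onI)
    have "inj_on (\<lambda>t. nat (t - int a)) (set ?high)"
      by (rule inj_onI) auto
    then show "distinct (map (\<lambda>t. nat (t - int a)) ?high)"
      by (simp add: distinct_map)
    have "{i. int i + int a \<in> ?S} = (\<lambda>t. nat (t - int a)) ` {t \<in> ?S. int a \<le> t}"
      by (auto intro: image_eqI[where x = "int _ + int a"])
    with finite show "set (sorted_list_of_set {i. int i + int a \<in> ?S})
        = set (map (\<lambda>t. nat (t - int a)) ?high)"
      by simp
  qed simp_all
  then have "yword a b \<pi> = map (\<lambda>t. zword a b \<pi> (nat (t - int a))) ?high"
    by (simp add: yword_def step_levels_eq)
  also have "\<dots> = map (step_at_level a b path) ?high"
    using finite zword_at_high_level by (intro map_cong) auto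
  finally show ?thesis .
qed

lemma word_rho_f: "word a b (rho_f a b \<pi>) = steps_by_level a b path"
proof -
  let ?S = "start_levels a b path"
  let ?low = "filter (\<lambda>t. t < int a) (sorted_list_of_set ?S)"
  have finite: "finite ?S"
    by (simp add: start_levels_def)
  have "map (step_at_level a b path) ?low = replicate (length ?low) N"
    using finite step_at_low_level by (simp add: map_replicate_const[symmetric] cong: map_cong)
  then have "steps_by_level a b path = replicate (length ?low) N @ yword a b \<pi>"
    unfolding steps_by_level_def yword_eq
    by (subst sorted_split_at[of _ "int a"]) simp_all
  then have "rho_f a b \<pi> = ptn (steps_by_level a b path)"
    by (simp add: rho_f_def ptn_replicate_N_append)
  then show ?thesis
    using word_ptn numN_numE_steps_by_level[OF lvl_after_path_inj] numN_path numE_path by simp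
qed

end

theorem mainTheorem7:
  fixes a b :: nat and \<pi> :: "nat multiset"
  assumes "0 < a" and "0 < b" and "coprime a b"
    and "\<pi> \<in> D a b"
  shows "word a b (rho_f a b \<pi>) = sw_plus a b (rev (word a b \<pi>))"
proof -
  interpret rational_Dyck_partition a b \<pi>
    using assms by unfold_locales
  have "\<forall>i<length path. 0 \<le> lvl_after a b path i"
    using lvl_after_path_nonneg by simp
  then have "sw_plus a b (rev path) = steps_by_level a b path"
    using sw_plus_rev_eq_steps_by_level numN_path numE_path lvl_after_path_inj by blast
  then show ?thesis
    using word_rho_f by simp
qed

end
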